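(* For all integers $a,b\ge1$, $\phi(p_{a,b})=-(-1)^{a+b}$.
   Context: $p_{a,b}=\sum_{i\in\mathbb{Z}}x_i^ax_{-i}^b$ in commuting variables $x_i$, $i\in\mathbb{Z}$. A signed graph is a finite graph (loops and multiple edges allowed) with $\mathrm{sgn}:E\to\{+,-\}$; a coloring $\kappa:V\to\mathbb{Z}$ is proper if $\kappa(u)\ne\mathrm{sgn}(e)\kappa(v)$ for every edge $e$ with endpoints $u,v$. An orientation assigns to each half-edge (a loop has two) an arrow toward or away from the vertex, such that on a positive edge exactly one of the two arrows points toward its vertex and on a negative edge both point toward or both point away. A cycle is a closed walk in which, considering only the edges of the walk, every vertex of the walk has at least one arrow pointing into it and one pointing out of it; an orientation is acyclic if it has no cycle; a sink is a vertex all of whose incident arrows point toward it (an isolated vertex is a sink). A signed poset is an acyclic orientation $P$ of a signed graph. A proper coloring $\kappa$ preserves $P$ if for every edge $e$ and each endpoint $v$ of $e$, with $u$ the other endpoint ($u=v$ for a loop), the arrow of $P$ at the incidence of $e$ with $v$ points toward $v$ iff $\kappa(v)>\mathrm{sgn}(e)\kappa(u)$. $Y_P=\sum_\kappa\prod_v x_{\kappa(v)}$ over proper colorings preserving $P$; $\mathbb{Y}$ is the $\mathbb{Q}$-span of all $Y_P$ (it is closed under products and contains $p_{a,b}$ for $a\ge1,b\ge0$ and $x_0$). $\phi:\mathbb{Y}\to\mathbb{Q}[t]$ is the (unique) $\mathbb{Q}$-linear map with $\phi(Y_P)=t^{\mathrm{sink}(P)}$, $\mathrm{sink}(P)$ the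 number of sinks of $P$ (its existence is established in the paper). *)

theory Defs
  imports Main "HOL-Library.Multiset" "HOL-Computational_Algebra.Polynomial"
begin

(* A signed edge (u, w, pos, au, aw):
   endpoints u, w (u = w for a loop); pos = True iff the sign is +;
   au = True iff the arrow at the incidence with u points toward u;
   aw = True iff the arrow at the incidence with w points toward w.
   A loop thus has two half-edges, both at u = w. *)
type_synonym sedge = "nat \<times> nat \<times> bool \<times> bool \<times> bool"

(* An oriented signed graph: vertices {0..<n}, finite list of edges
   (multiple edges and loops allowed). *)
type_synonym sgraph = "nat \<times> sedge list"

definition e_u :: "sedge \<Rightarrow> nat" where "e_u e = fst e"
definition e_w :: "sedge \<Rightarrow> nat" where "e_w e = fst (snd e)"
definition e_pos :: "sedge \<Rightarrow> bool" where "e_pos e = fst (snd (snd e))"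
definition e_au :: "sedge \<Rightarrow> bool" where "e_au e = fst (snd (snd (snd e)))"
definition e_aw :: "sedge \<Rightarrow> bool" where "e_aw e = snd (snd (snd (snd e)))"

definition e_sgn :: "sedge \<Rightarrow> int" where
  "e_sgn e = (if e_pos e then 1 else -1)"

definition is_oriented :: "sgraph \<Rightarrow> bool" where
  "is_oriented G \<longleftrightarrow> (\<forall>e\<in>set (snd G).
      e_u e < fst G \<and> e_w e < fst G \<and>
      (if e_pos e then e_au e \<noteq> e_aw e else e_au e = e_aw e))"

definition connects :: "sedge \<Rightarrow> nat \<Rightarrow> nat \<Rightarrow> bool" where
  "connects e x y \<longleftrightarrow> (e_u e = x \<and> e_w e = y) \<or> (e_u e = y \<and> e_w e = x)"

definition arrow_in :: "nat \<Rightarrow> sedge \<Rightarrow> bool" where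
  "arrow_in v e \<longleftrightarrow> (e_u e = v \<and> e_au e) \<or> (e_w e = v \<and> e_aw e)"
definition arrow_out :: "nat \<Rightarrow> sedge \<Rightarrow> bool" where
  "arrow_out v e \<longleftrightarrow> (e_u e = v \<and> \<not> e_au e) \<or> (e_w e = v \<and> \<not> e_aw e)"

definition closed_walk :: "sgraph \<Rightarrow> nat list \<Rightarrow> nat list \<Rightarrow> bool" where
  "closed_walk G vs es \<longleftrightarrow> vs \<noteq> [] \<and> length es = length vs \<and>
     (\<forall>i<length vs. es ! i < length (snd G) \<and>
        connects (snd G ! (es ! i)) (vs ! i) (vs ! (Suc i mod length vs)))"

definition is_cycle :: "sgraph \<Rightarrow> nat list \<Rightarrow> nat list \<Rightarrow> bool" where
  "is_cycle G vs es \<longleftrightarrow> closed_walk G vs es \<and>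
     (\<forall>v\<in>set vs. (\<exists>j\<in>set es. arrow_in v (snd G ! j)) \<and>
                  (\<exists>j\<in>set es. arrow_out v (snd G ! j)))"

definition signed_poset :: "sgraph \<Rightarrow> bool" where
  "signed_poset P \<longleftrightarrow> is_oriented P \<and> \<not> (\<exists>vs es. is_cycle P vs es)"

definition sinks :: "sgraph \<Rightarrow> nat" where
  "sinks P = card {v. v < fst P \<and>
      (\<forall>e\<in>set (snd P). (e_u e = v \<longrightarrow> e_au e) \<and> (e_w e = v \<longrightarrow> e_aw e))}"

definition proper :: "sgraph \<Rightarrow> int list \<Rightarrow> bool" where
  "proper G k \<longleftrightarrow> length k = fst G \<and>
     (\<forall>e\<in>set (snd G). k ! e_u e \<noteq> e_sgn e * k ! e_w e)"

definition preserves :: "sgraph \<Rightarrow> int list \<Rightarrow> bool" where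
  "preserves P k \<longleftrightarrow> (\<forall>e\<in>set (snd P).
      (e_au e \<longleftrightarrow> k ! e_u e > e_sgn e * k ! e_w e) \<and>
      (e_aw e \<longleftrightarrow> k ! e_w e > e_sgn e * k ! e_u e))"

(* Formal power series in commuting variables x_i (i in Z) are represented by their
   coefficient functions on monomials; a monomial is a finite multiset of indices. *)
type_synonym fps_Z = "int multiset \<Rightarrow> rat"

definition Y :: "sgraph \<Rightarrow> fps_Z" where
  "Y P m = of_nat (card {k. proper P k \<and> preserves P k \<and> mset k = m})"

(* p_{a,b} = sum_i x_i^a x_{-i}^b *)
definition p :: "nat \<Rightarrow> nat \<Rightarrow> fps_Z" where
  "p a b m = of_nat (card {i::int. replicate_mset a i + replicate_mset b (- i) = m})"

definition lin_comb :: "sgraph list \<Rightarrow> rat list \<Rightarrow> fps_Z" where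
  "lin_comb Ps cs = (\<lambda>m. \<Sum>j<length Ps. cs ! j * Y (Ps ! j) m)"

definition inY :: "fps_Z \<Rightarrow> bool" where
  "inY f \<longleftrightarrow> (\<exists>Ps cs. (\<forall>P\<in>set Ps. signed_poset P) \<and> length cs = length Ps \<and>
                      f = lin_comb Ps cs)"

(* phi: the Q-linear map with phi(Y_P) = t^sink(P); defined as the common value
   over all representations of f as a linear combination of Y_P's *)
definition phi :: "fps_Z \<Rightarrow> rat poly" where
  "phi f = (THE q. \<forall>Ps cs. (\<forall>P\<in>set Ps. signed_poset P) \<and> length cs = length Ps \<and>
                            f = lin_comb Ps cs \<longrightarrow>
                 q = (\<Sum>j<length Ps. monom (cs ! j) (sinks (Ps ! j))))"

end

theory Submission
  imports Defs "HOL-Library.FuncSet"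
begin

text \<open>
  phi is evaluated through an invariant of the representations of a series f in Y. Keep the
  monomials of f of degree at most D and substitute x_c := -1 for |c| <= m, x_(m+1) := t - 1 and
  x_(-m-1) := 0; the result is a polynomial in m of degree at most D, and its value at m = -1 is
  computed by Newton's forward differences. This is linear in f, and for f = Y_P it equals
  t^sink(P): sorting the colorings with colors in [-m-1, m+1] by the vertices of color m + 1
  (which must be sinks) and -m-1 (which must be sources) expresses their number through
  colorings of induced subgraphs with colors in [-m, m], whose numbers take the value (-1)^|S|
  at m = -1 by reciprocity; the remaining alternating sums vanish because in an acyclic
  orientation every induced subgraph with an edge has a sink or a source lying on an edge. Hence
  all representations of f give the same polynomial, which is phi f. For p_(a,b) the
  specialization is (2m + 1)(-1)^(a+b), with value -(-1)^(a+b) at m = -1. Finally p_(a,b) lies in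
  Y: it counts colorings of a path on a + b vertices whose adjacent colors are tied as in x_i^a
  x_(-i)^b, and inclusion-exclusion over the two orientations of each path edge turns this count
  into a signed sum of Y_P over oriented subgraphs of the signed path.
\<close>

section \<open>Extrapolation to -1\<close>

(* If g is a polynomial of degree at most d, this is g (-1): the recursion is
   g (-1) = g 0 - (Delta g) (-1) with Delta g = (%m. g (Suc m) - g m) of degree at most d - 1. *)
fun extrap_neg1 :: "nat \<Rightarrow> (nat \<Rightarrow> 'a::ab_group_add) \<Rightarrow> 'a" where
  "extrap_neg1 0 g = g 0"
| "extrap_neg1 (Suc d) g = g 0 - extrap_neg1 d (\<lambda>m. g (Suc m) - g m)"

lemma extrap_neg1_additive:
  assumes "\<And>x y. h (x - y) = h x - h y"
  shows "extrap_neg1 d (\<lambda>m. h (f m)) = h (extrap_neg1 d f)"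
proof (induction d arbitrary: f)
  case (Suc d)
  then show ?case
    using Suc[of "\<lambda>m. f (Suc m) - f m"] by (simp add: assms)
qed simp

lemma extrap_neg1_diff: "extrap_neg1 d (\<lambda>m. f m - g m) = extrap_neg1 d f - extrap_neg1 d g"
proof (induction d arbitrary: f g)
  case (Suc d)
  have "extrap_neg1 d (\<lambda>m. (f (Suc m) - g (Suc m)) - (f m - g m)) =
        extrap_neg1 d (\<lambda>m. (f (Suc m) - f m) - (g (Suc m) - g m))"
    by (simp add: algebra_simps)
  then show ?case by (simp add: Suc)
qed simp

lemma extrap_neg1_zero: "extrap_neg1 d (\<lambda>m. 0) = 0"
  by (induction d) simp_all

lemma extrap_neg1_add: "extrap_neg1 d (\<lambda>m. f m + g m) = extrap_neg1 d f + extrap_neg1 d g"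
  using extrap_neg1_diff[of d "\<lambda>m. f m + g m" g] by simp

lemma extrap_neg1_sum:
  "finite I \<Longrightarrow> extrap_neg1 d (\<lambda>m. \<Sum>i\<in>I. h i m) = (\<Sum>i\<in>I. extrap_neg1 d (h i))"
  by (induction I rule: finite_induct) (simp_all add: extrap_neg1_zero extrap_neg1_add)

lemma extrap_neg1_mult_left:
  fixes c :: "'a::ring"
  shows "extrap_neg1 d (\<lambda>m. c * f m) = c * extrap_neg1 d f"
  by (rule extrap_neg1_additive[where h = "(*) c"]) (simp add: right_diff_distrib)

lemma extrap_neg1_smult:
  fixes c :: "'a::comm_ring"
  shows "extrap_neg1 d (\<lambda>m. smult c (f m)) = smult c (extrap_neg1 d f)"
  by (rule extrap_neg1_additive[where h = "smult c"]) (simp add: smult_diff_right)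

lemma extrap_neg1_const: "extrap_neg1 d (\<lambda>m. c) = c"
  by (induction d) (simp_all add: extrap_neg1_zero)

lemma extrap_neg1_of_nat: "d \<ge> 1 \<Longrightarrow> extrap_neg1 d (\<lambda>m. of_nat m :: 'a::ring_1) = -1"
  by (cases d) (simp_all add: extrap_neg1_const)

section \<open>Colorings of induced subgraphs\<close>

definition induced_edge :: "nat set \<Rightarrow> sedge \<Rightarrow> bool" where
  "induced_edge S e \<longleftrightarrow> e_u e \<in> S \<and> e_w e \<in> S"

definition respects_edge :: "sedge \<Rightarrow> int \<Rightarrow> int \<Rightarrow> bool" where
  "respects_edge e x y \<longleftrightarrow> x \<noteq> e_sgn e * y \<and>
     (e_au e \<longleftrightarrow> x > e_sgn e * y) \<and> (e_aw e \<longleftrightarrow> y > e_sgn e * x)"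

definition admissible_on :: "sedge list \<Rightarrow> nat set \<Rightarrow> (nat \<Rightarrow> int) \<Rightarrow> bool" where
  "admissible_on E S k \<longleftrightarrow>
     (\<forall>e\<in>set E. induced_edge S e \<longrightarrow> respects_edge e (k (e_u e)) (k (e_w e)))"

definition colorings :: "sedge list \<Rightarrow> nat set \<Rightarrow> nat \<Rightarrow> (nat \<Rightarrow> int) set" where
  "colorings E S m = {k \<in> S \<rightarrow>\<^sub>E {- int m..int m}. admissible_on E S k}"

definition sinks_on :: "sedge list \<Rightarrow> nat set \<Rightarrow> nat set" where
  "sinks_on E S = {v\<in>S. \<forall>e\<in>set E. induced_edge S e \<longrightarrow>
                          (e_u e = v \<longrightarrow> e_au e) \<and> (e_w e = v \<longrightarrow> e_aw e)}"

definition sources_on :: "sedge list \<Rightarrow> nat set \<Rightarrow> nat set" where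
  "sources_on E S = {v\<in>S. \<forall>e\<in>set E. induced_edge S e \<longrightarrow>
                            (e_u e = v \<longrightarrow> \<not> e_au e) \<and> (e_w e = v \<longrightarrow> \<not> e_aw e)}"

definition well_oriented :: "sedge list \<Rightarrow> bool" where
  "well_oriented E \<longleftrightarrow> (\<forall>e\<in>set E. if e_pos e then e_au e \<noteq> e_aw e else e_au e = e_aw e)"

definition disjoint_pairs :: "'a set \<Rightarrow> 'a set \<Rightarrow> ('a set \<times> 'a set) set" where
  "disjoint_pairs A B = {(T, W). T \<subseteq> A \<and> W \<subseteq> B \<and> T \<inter> W = {}}"

definition extend_coloring :: "nat set \<Rightarrow> nat set \<Rightarrow> int \<Rightarrow> (nat \<Rightarrow> int) \<Rightarrow> nat \<Rightarrow> int" where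
  "extend_coloring T W M k v = (if v \<in> T then M else if v \<in> W then - M else k v)"

lemma sinks_on_subset: "sinks_on E S \<subseteq> S"
  and sources_on_subset: "sources_on E S \<subseteq> S"
  unfolding sinks_on_def sources_on_def by auto

lemma admissible_on_cong:
  "(\<And>v. v \<in> S \<Longrightarrow> k v = k' v) \<Longrightarrow> admissible_on E S k \<longleftrightarrow> admissible_on E S k'"
  unfolding admissible_on_def induced_edge_def by auto

lemma finite_colorings: "finite S \<Longrightarrow> finite (colorings E S m)"
  unfolding colorings_def
  by (rule finite_subset[of _ "S \<rightarrow>\<^sub>E {- int m..int m}"]) (auto intro: finite_PiE)

lemma finite_disjoint_pairs: "finite A \<Longrightarrow> finite B \<Longrightarrow> finite (disjoint_pairs A B)"
  unfolding disjoint_pairs_def by (rule finite_subset[of _ "Pow A \<times> Pow B"]) auto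

lemma respects_edge_extreme_iff:
  fixes x y M :: int
  assumes "M > 0" "\<bar>x\<bar> \<le> M" "\<bar>y\<bar> \<le> M"
    and "if e_pos e then e_au e \<noteq> e_aw e else e_au e = e_aw e"
  shows "respects_edge e x y \<longleftrightarrow>
           (x = M \<longrightarrow> e_au e) \<and> (x = - M \<longrightarrow> \<not> e_au e) \<and>
           (y = M \<longrightarrow> e_aw e) \<and> (y = - M \<longrightarrow> \<not> e_aw e) \<and>
           (\<bar>x\<bar> < M \<longrightarrow> \<bar>y\<bar> < M \<longrightarrow> respects_edge e x y)"
  using assms unfolding respects_edge_def e_sgn_def
  by (cases "e_pos e") (auto split: if_splits)

lemma admissible_on_peel:
  assumes orient: "well_oriented E" and M: "M > 0" and bound: "\<forall>v\<in>S. \<bar>k v\<bar> \<le> M"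
  defines "T \<equiv> {v\<in>S. k v = M}" and "W \<equiv> {v\<in>S. k v = - M}"
  shows "admissible_on E S k \<longleftrightarrow>
           admissible_on E (S - T - W) k \<and> T \<subseteq> sinks_on E S \<and> W \<subseteq> sources_on E S"
proof -
  let ?x = "\<lambda>e. k (e_u e)" and ?y = "\<lambda>e. k (e_w e)"
  have "admissible_on E S k \<longleftrightarrow> (\<forall>e\<in>set E. induced_edge S e \<longrightarrow>
      (?x e = M \<longrightarrow> e_au e) \<and> (?x e = - M \<longrightarrow> \<not> e_au e) \<and>
      (?y e = M \<longrightarrow> e_aw e) \<and> (?y e = - M \<longrightarrow> \<not> e_aw e) \<and>
      (\<bar>?x e\<bar> < M \<longrightarrow> \<bar>?y e\<bar> < M \<longrightarrow> respects_edge e (?x e) (?y e)))"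
    unfolding admissible_on_def
    using orient bound M unfolding well_oriented_def induced_edge_def
    by (intro ball_cong refl imp_cong respects_edge_extreme_iff) auto
  moreover have "admissible_on E (S - T - W) k \<longleftrightarrow> (\<forall>e\<in>set E. induced_edge S e \<longrightarrow>
      \<bar>?x e\<bar> < M \<longrightarrow> \<bar>?y e\<bar> < M \<longrightarrow> respects_edge e (?x e) (?y e))"
  proof -
    have "v \<in> S - T - W \<longleftrightarrow> v \<in> S \<and> \<bar>k v\<bar> < M" for v
      using bound unfolding T_def W_def by force
    then show ?thesis unfolding admissible_on_def induced_edge_def by blast
  qed
  moreover have "T \<subseteq> sinks_on E S \<longleftrightarrow>
      (\<forall>e\<in>set E. induced_edge S e \<longrightarrow> (?x e = M \<longrightarrow> e_au e) \<and> (?y e = M \<longrightarrow> e_aw e))"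
    unfolding T_def sinks_on_def induced_edge_def by blast
  moreover have "W \<subseteq> sources_on E S \<longleftrightarrow>
      (\<forall>e\<in>set E. induced_edge S e \<longrightarrow> (?x e = - M \<longrightarrow> \<not> e_au e) \<and> (?y e = - M \<longrightarrow> \<not> e_aw e))"
    unfolding W_def sources_on_def induced_edge_def by blast
  ultimately show ?thesis by blast
qed

lemma extend_coloring_level_sets:
  assumes "T \<subseteq> S" "W \<subseteq> S" "T \<inter> W = {}" "M > 0" "\<forall>v\<in>S - T - W. \<bar>k v\<bar> < M"
  shows "{v\<in>S. extend_coloring T W M k v = M} = T"
    and "{v\<in>S. extend_coloring T W M k v = - M} = W"
proof -
  have inner: "\<bar>k v\<bar> < M" if "v \<in> S" "v \<notin> T" "v \<notin> W" for v
    using assms(5) that by blast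
  show "{v\<in>S. extend_coloring T W M k v = M} = T"
  proof (intro equalityI subsetI)
    fix v assume "v \<in> {v\<in>S. extend_coloring T W M k v = M}"
    then show "v \<in> T"
      using inner[of v] assms(4) unfolding extend_coloring_def by (auto split: if_splits)
  qed (use assms(1) in \<open>auto simp: extend_coloring_def\<close>)
  show "{v\<in>S. extend_coloring T W M k v = - M} = W"
  proof (intro equalityI subsetI)
    fix v assume "v \<in> {v\<in>S. extend_coloring T W M k v = - M}"
    then show "v \<in> W"
      using inner[of v] assms(4) unfolding extend_coloring_def by (auto split: if_splits)
  qed (use assms(2,3) in \<open>auto simp: extend_coloring_def\<close>)
qed

lemma extend_coloring_in_colorings:
  fixes m :: nat
  assumes orient: "well_oriented E"
    and TW: "(T, W) \<in> disjoint_pairs (sinks_on E S) (sources_on E S)"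
    and k: "k \<in> colorings E (S - T - W) m"
  defines "M \<equiv> int (Suc m)"
  shows "extend_coloring T W M k \<in> colorings E S (Suc m)"
    and "{v\<in>S. extend_coloring T W M k v = M} = T"
    and "{v\<in>S. extend_coloring T W M k v = - M} = W"
    and "restrict (extend_coloring T W M k) (S - T - W) = k"
proof -
  let ?y = "extend_coloring T W M k"
  have M: "M > 0" unfolding M_def by simp
  have T: "T \<subseteq> S" "T \<subseteq> sinks_on E S" and W: "W \<subseteq> S" "W \<subseteq> sources_on E S" and "T \<inter> W = {}"
    using TW sinks_on_subset sources_on_subset unfolding disjoint_pairs_def by blast+
  have ext: "k \<in> extensional (S - T - W)" and inner: "\<forall>v\<in>S - T - W. \<bar>k v\<bar> < M"
    using k unfolding colorings_def M_def by (force simp: PiE_iff abs_less_iff)+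
  show levels: "{v\<in>S. ?y v = M} = T" "{v\<in>S. ?y v = - M} = W"
    using extend_coloring_level_sets[OF T(1) W(1) \<open>T \<inter> W = {}\<close> M inner] by blast+
  have bound: "\<forall>v\<in>S. \<bar>?y v\<bar> \<le> M"
    using inner M by (force simp: extend_coloring_def)
  have "admissible_on E (S - T - W) k" using k unfolding colorings_def by blast
  then have "admissible_on E (S - T - W) ?y"
    by (rule iffD1[OF admissible_on_cong, rotated]) (auto simp: extend_coloring_def)
  then have "admissible_on E S ?y"
    using admissible_on_peel[OF orient M bound] T(2) W(2) unfolding levels by blast
  moreover have "?y \<in> extensional S"
    using ext T(1) W(1) by (auto simp: extend_coloring_def extensional_def)
  ultimately show "?y \<in> colorings E S (Suc m)"
    using bound unfolding colorings_def M_def by (auto simp: PiE_iff abs_le_iff)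
  show "restrict ?y (S - T - W) = k"
    using ext by (auto simp: extend_coloring_def extensional_def)
qed

lemma colorings_Suc_split:
  fixes m :: nat
  assumes orient: "well_oriented E" and k: "k \<in> colorings E S (Suc m)"
  defines "M \<equiv> int (Suc m)"
  defines "T \<equiv> {v\<in>S. k v = M}" and "W \<equiv> {v\<in>S. k v = - M}"
  shows "(T, W) \<in> disjoint_pairs (sinks_on E S) (sources_on E S)"
    and "restrict k (S - T - W) \<in> colorings E (S - T - W) m"
    and "extend_coloring T W M (restrict k (S - T - W)) = k"
proof -
  have M: "M > 0" unfolding M_def by simp
  have ext: "k \<in> extensional S" and bound: "\<forall>v\<in>S. \<bar>k v\<bar> \<le> M" and adm: "admissible_on E S k"
    using k unfolding colorings_def M_def by (auto simp: PiE_iff abs_le_iff)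
  have peel: "admissible_on E (S - T - W) k" "T \<subseteq> sinks_on E S" "W \<subseteq> sources_on E S"
    using adm admissible_on_peel[OF orient M bound] unfolding T_def W_def by blast+
  moreover have "T \<inter> W = {}" unfolding T_def W_def using M by auto
  ultimately show "(T, W) \<in> disjoint_pairs (sinks_on E S) (sources_on E S)"
    unfolding disjoint_pairs_def by blast
  have "k v \<in> {- int m..int m}" if "v \<in> S - T - W" for v
    using bound[rule_format, of v] that unfolding T_def W_def M_def by auto
  then have "restrict k (S - T - W) \<in> (S - T - W) \<rightarrow>\<^sub>E {- int m..int m}"
    by (simp add: restrict_PiE_iff)
  moreover have "admissible_on E (S - T - W) (restrict k (S - T - W))"
    using peel(1) by (rule iffD1[OF admissible_on_cong, rotated]) simp
  ultimately show "restrict k (S - T - W) \<in> colorings E (S - T - W) m"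
    unfolding colorings_def by blast
  show "extend_coloring T W M (restrict k (S - T - W)) = k"
  proof
    fix v show "extend_coloring T W M (restrict k (S - T - W)) v = k v"
      using ext unfolding T_def W_def extend_coloring_def
      by (cases "v \<in> S") (auto simp: extensional_def)
  qed
qed

lemma bij_betw_extend_coloring:
  assumes "well_oriented E"
  shows "bij_betw (\<lambda>((T, W), k). extend_coloring T W (int (Suc m)) k)
           (SIGMA (T, W):disjoint_pairs (sinks_on E S) (sources_on E S). colorings E (S - T - W) m)
           (colorings E S (Suc m))"
proof -
  let ?M = "int (Suc m)"
  define split where "split k = (({v\<in>S. k v = ?M}, {v\<in>S. k v = - ?M}),
      restrict k (S - {v\<in>S. k v = ?M} - {v\<in>S. k v = - ?M}))" for k
  have forward: "split (extend_coloring T W ?M k) = ((T, W), k) \<and>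
      extend_coloring T W ?M k \<in> colorings E S (Suc m)"
    if "(T, W) \<in> disjoint_pairs (sinks_on E S) (sources_on E S)" "k \<in> colorings E (S - T - W) m"
    for T W k
    using extend_coloring_in_colorings[OF assms that] unfolding split_def by simp
  have backward: "(\<lambda>((T, W), k). extend_coloring T W ?M k) (split k) = k \<and>
      split k \<in> (SIGMA (T, W):disjoint_pairs (sinks_on E S) (sources_on E S).
                      colorings E (S - T - W) m)"
    if "k \<in> colorings E S (Suc m)" for k
    using colorings_Suc_split[OF assms that] unfolding split_def by simp
  show ?thesis
  proof (rule bij_betw_byWitness[where f' = split])
    show "split ` colorings E S (Suc m) \<subseteq>
        (SIGMA (T, W):disjoint_pairs (sinks_on E S) (sources_on E S). colorings E (S - T - W) m)"
      using backward by blast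
  qed (use forward backward in auto)
qed

lemma finite_disjoint_pairs_sinks_sources:
  "finite S \<Longrightarrow> finite (disjoint_pairs (sinks_on E S) (sources_on E S))"
  by (intro finite_disjoint_pairs finite_subset[OF sinks_on_subset]
      finite_subset[OF sources_on_subset])

lemma sum_colorings_Suc:
  assumes "well_oriented E" "finite S"
  shows "(\<Sum>k\<in>colorings E S (Suc m). g k) =
    (\<Sum>(T, W)\<in>disjoint_pairs (sinks_on E S) (sources_on E S).
        \<Sum>k\<in>colorings E (S - T - W) m. g (extend_coloring T W (int (Suc m)) k))"
proof -
  let ?Sig = "SIGMA (T, W):disjoint_pairs (sinks_on E S) (sources_on E S).
                 colorings E (S - T - W) m"
  have "(\<Sum>k\<in>colorings E S (Suc m). g k) =
      (\<Sum>((T, W), k)\<in>?Sig. g (extend_coloring T W (int (Suc m)) k))"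
    using sum.reindex_bij_betw[OF bij_betw_extend_coloring[OF assms(1)], of g]
    by (simp add: case_prod_unfold)
  also have "\<dots> = (\<Sum>TW\<in>disjoint_pairs (sinks_on E S) (sources_on E S).
      \<Sum>k\<in>colorings E (S - fst TW - snd TW) m.
        g (extend_coloring (fst TW) (snd TW) (int (Suc m)) k))"
    by (subst sum.Sigma)
       (auto simp: assms(2) finite_disjoint_pairs_sinks_sources finite_colorings split_def)
  also have "\<dots> = (\<Sum>(T, W)\<in>disjoint_pairs (sinks_on E S) (sources_on E S).
      \<Sum>k\<in>colorings E (S - T - W) m. g (extend_coloring T W (int (Suc m)) k))"
    by (simp add: case_prod_unfold)
  finally show ?thesis .
qed

lemma card_colorings_Suc_diff:
  assumes "well_oriented E" "finite S"
  shows "(of_nat (card (colorings E S (Suc m))) :: 'a::comm_ring_1) -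
      of_nat (card (colorings E S m)) =
    (\<Sum>(T, W)\<in>disjoint_pairs (sinks_on E S) (sources_on E S) - {({}, {})}.
       of_nat (card (colorings E (S - T - W) m)))"
proof -
  let ?P = "disjoint_pairs (sinks_on E S) (sources_on E S)"
  let ?c = "\<lambda>(T, W). of_nat (card (colorings E (S - T - W) m)) :: 'a"
  have "({}, {}) \<in> ?P" unfolding disjoint_pairs_def by simp
  then have "sum ?c ?P = of_nat (card (colorings E S m)) + sum ?c (?P - {({}, {})})"
    using sum.remove[OF finite_disjoint_pairs_sinks_sources[OF assms(2)], where g = ?c] by simp
  moreover have "of_nat (card (colorings E S (Suc m))) = sum ?c ?P"
    using sum_colorings_Suc[OF assms, of "\<lambda>_. 1 :: 'a" m] by (simp add: case_prod_unfold)
  ultimately show ?thesis by simp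
qed

lemma card_colorings_0:
  assumes "finite S"
  shows "card (colorings E S 0) = (if \<exists>e\<in>set E. induced_edge S e then 0 else 1)"
proof (cases "\<exists>e\<in>set E. induced_edge S e")
  case True
  then obtain e where e: "e \<in> set E" "induced_edge S e" by blast
  have "\<not> admissible_on E S k" if "k \<in> S \<rightarrow>\<^sub>E {0}" for k
  proof -
    have "k (e_u e) = 0" "k (e_w e) = 0"
      using that e(2) by (auto simp: induced_edge_def PiE_iff)
    then have "\<not> respects_edge e (k (e_u e)) (k (e_w e))" by (simp add: respects_edge_def)
    then show ?thesis using e unfolding admissible_on_def by blast
  qed
  then have "colorings E S 0 = {}" unfolding colorings_def by auto
  then show ?thesis using True by simp
next
  case False
  then have "colorings E S 0 = S \<rightarrow>\<^sub>E {0}" unfolding colorings_def admissible_on_def by auto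
  then show ?thesis using False assms by (simp add: card_PiE)
qed

section \<open>Alternating sums and reciprocity\<close>

lemma sum_Pow_neg_one_power_card_diff:
  assumes "finite R" "C \<subseteq> R"
  shows "(\<Sum>W\<in>Pow C. (-1 :: 'a::comm_ring_1) ^ card (R - W)) = (if C = {} then (-1) ^ card R else 0)"
proof -
  have fin: "finite C" using assms finite_subset by blast
  have split: "(-1 :: 'a) ^ card (R - W) = (-1) ^ card (R - C) * (-1) ^ (card C - card W)"
    if "W \<subseteq> C" for W
  proof -
    have "R - W = (R - C) \<union> (C - W)" "(R - C) \<inter> (C - W) = {}" using that assms(2) by auto
    then have "card (R - W) = card (R - C) + (card C - card W)"
      using that assms fin by (simp add: card_Un_disjoint card_Diff_subset finite_subset)
    then show ?thesis by (simp add: power_add)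
  qed
  have "(\<Sum>W\<in>Pow C. (-1 :: 'a) ^ card (R - W)) =
      (-1) ^ card (R - C) * (\<Sum>W\<in>Pow C. (-1) ^ (card C - card W))"
    unfolding sum_distrib_left by (intro sum.cong refl split) simp
  also have "(\<Sum>W\<in>Pow C. (-1 :: 'a) ^ (card C - card W)) = (\<Prod>x\<in>C. 1 - 1)"
    using prod_diff_conv_sum'[OF fin, of "\<lambda>_. 1 :: 'a" "\<lambda>_. 1"] by simp
  finally show ?thesis using fin assms by (simp add: power_0_left)
qed

lemma sum_disjoint_pairs_eq:
  assumes "finite A" "finite B"
  shows "(\<Sum>(T, W)\<in>disjoint_pairs A B. f T W) = (\<Sum>T\<in>Pow A. \<Sum>W\<in>Pow (B - T). f T W)"
    and "(\<Sum>(T, W)\<in>disjoint_pairs A B. f T W) = (\<Sum>W\<in>Pow B. \<Sum>T\<in>Pow (A - W). f T W)"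
proof -
  have "disjoint_pairs A B = Sigma (Pow A) (\<lambda>T. Pow (B - T))"
    unfolding disjoint_pairs_def by auto
  then show "(\<Sum>(T, W)\<in>disjoint_pairs A B. f T W) = (\<Sum>T\<in>Pow A. \<Sum>W\<in>Pow (B - T). f T W)"
    using assms by (simp add: sum.Sigma)
  have "disjoint_pairs A B = (\<lambda>(W, T). (T, W)) ` Sigma (Pow B) (\<lambda>W. Pow (A - W))"
    unfolding disjoint_pairs_def by auto
  then have "(\<Sum>(T, W)\<in>disjoint_pairs A B. f T W) = (\<Sum>(W, T)\<in>Sigma (Pow B) (\<lambda>W. Pow (A - W)). f T W)"
    by (simp add: sum.reindex inj_on_def case_prod_unfold)
  then show "(\<Sum>(T, W)\<in>disjoint_pairs A B. f T W) = (\<Sum>W\<in>Pow B. \<Sum>T\<in>Pow (A - W). f T W)"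
    using assms by (simp add: sum.Sigma)
qed

lemma sum_disjoint_pairs_sign:
  assumes "finite S" "A \<subseteq> S" "B \<subseteq> S"
  shows "(\<Sum>(T, W)\<in>disjoint_pairs A B. (-1 :: 'a::comm_ring_1) ^ card (S - T - W)) =
           (if A = B then (-1) ^ card (S - A) else 0)"
proof -
  have fin: "finite A" "finite B" using assms finite_subset by blast+
  have inner: "(\<Sum>W\<in>Pow (Y - X). (-1 :: 'a) ^ card (S - X - W)) =
      (if Y - X = {} then (-1) ^ card (S - X) else 0)" if "Y \<subseteq> S" for X Y
  proof -
    have "Y - X \<subseteq> S - X" using that by blast
    then show ?thesis using sum_Pow_neg_one_power_card_diff[of "S - X" "Y - X"] assms(1) by simp
  qed
  have by_T: "(\<Sum>(T, W)\<in>disjoint_pairs A B. (-1 :: 'a) ^ card (S - T - W)) =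
      (\<Sum>T\<in>Pow A. if B - T = {} then (-1) ^ card (S - T) else 0)"
    by (simp add: sum_disjoint_pairs_eq(1)[OF fin] inner[OF assms(3)])
  have by_W: "(\<Sum>(T, W)\<in>disjoint_pairs A B. (-1 :: 'a) ^ card (S - T - W)) =
      (\<Sum>W\<in>Pow B. if A - W = {} then (-1) ^ card (S - W) else 0)"
  proof -
    have "S - T - W = S - W - T" for T W :: "'b set" by blast
    then show ?thesis by (simp add: sum_disjoint_pairs_eq(2)[OF fin] inner[OF assms(2)])
  qed
  consider "A = B" | v where "v \<in> B - A" | v where "v \<in> A - B" by blast
  then show ?thesis
  proof cases
    case 1
    have "(\<Sum>T\<in>Pow A. if B - T = {} then (-1 :: 'a) ^ card (S - T) else 0) =
        (\<Sum>T\<in>Pow A. if T = A then (-1) ^ card (S - T) else 0)"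
      using 1 by (intro sum.cong) auto
    also have "\<dots> = (-1) ^ card (S - A)" using fin by simp
    finally show ?thesis unfolding by_T using 1 by simp
  next
    case 2
    then have "A \<noteq> B" "\<forall>T\<in>Pow A. B - T \<noteq> {}" by blast+
    then show ?thesis unfolding by_T by (simp add: sum.neutral)
  next
    case 3
    then have "A \<noteq> B" "\<forall>W\<in>Pow B. A - W \<noteq> {}" by blast+
    then show ?thesis unfolding by_W by (simp add: sum.neutral)
  qed
qed

lemma sum_disjoint_pairs_sinks_sources_sign:
  assumes "finite S"
    and extremal: "(\<exists>e\<in>set E. induced_edge S e) \<Longrightarrow> sinks_on E S \<noteq> sources_on E S"
  shows "(\<Sum>(T, W)\<in>disjoint_pairs (sinks_on E S) (sources_on E S).
            (-1 :: 'a::comm_ring_1) ^ card (S - T - W))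
           = (if \<exists>e\<in>set E. induced_edge S e then 0 else 1)"
proof (cases "\<exists>e\<in>set E. induced_edge S e")
  case True
  then show ?thesis
    using extremal sum_disjoint_pairs_sign[OF assms(1) sinks_on_subset[of E S]
      sources_on_subset[of E S]] by simp
next
  case False
  then have "sinks_on E S = S" "sources_on E S = S" unfolding sinks_on_def sources_on_def by auto
  then show ?thesis
    using False sum_disjoint_pairs_sign[OF assms(1) sinks_on_subset[of E S]
      sources_on_subset[of E S]] by simp
qed

(* The hypothesis makes the alternating sum over the peeled
   sinks and sources vanish whenever S spans an edge. *)
lemma extrap_neg1_card_colorings:
  assumes orient: "well_oriented E" and "finite V"
    and extremal: "\<forall>S\<subseteq>V. (\<exists>e\<in>set E. induced_edge S e) \<longrightarrow> sinks_on E S \<noteq> sources_on E S"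
  shows "S \<subseteq> V \<Longrightarrow> card S \<le> d \<Longrightarrow>
    extrap_neg1 d (\<lambda>m. of_nat (card (colorings E S m)) :: 'a::comm_ring_1) = (-1) ^ card S"
proof (induction d arbitrary: S)
  case 0
  then have "S = {}" using \<open>finite V\<close> by (simp add: finite_subset)
  then show ?case by (simp add: card_colorings_0 induced_edge_def)
next
  case (Suc d)
  have fin: "finite S" using Suc.prems \<open>finite V\<close> finite_subset by blast
  let ?P = "disjoint_pairs (sinks_on E S) (sources_on E S)"
  let ?c = "\<lambda>R m. of_nat (card (colorings E R m)) :: 'a"
  let ?no_edge = "if \<exists>e\<in>set E. induced_edge S e then 0 else 1 :: 'a"
  have finP: "finite ?P" by (rule finite_disjoint_pairs_sinks_sources[OF fin])
  have empty: "({}, {}) \<in> ?P" unfolding disjoint_pairs_def by simp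
  have "extrap_neg1 d (\<lambda>m. ?c S (Suc m) - ?c S m) =
      (\<Sum>(T, W)\<in>?P - {({}, {})}. extrap_neg1 d (?c (S - T - W)))"
    using finP by (simp add: card_colorings_Suc_diff[OF orient fin] extrap_neg1_sum
      case_prod_unfold)
  also have "\<dots> = (\<Sum>(T, W)\<in>?P - {({}, {})}. (-1) ^ card (S - T - W))"
  proof (rule sum.cong[OF refl])
    fix TW assume TW: "TW \<in> ?P - {({}, {})}"
    obtain T W where TW_eq: "TW = (T, W)" by (cases TW)
    have "S - T - W \<subset> S"
      using TW sinks_on_subset sources_on_subset unfolding TW_eq disjoint_pairs_def by blast
    then have "card (S - T - W) < card S" using fin by (rule psubset_card_mono[rotated])
    then have "card (S - T - W) \<le> d" using Suc.prems(2) by simp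
    moreover have "S - T - W \<subseteq> V" using Suc.prems(1) by blast
    ultimately have "extrap_neg1 d (?c (S - T - W)) = (-1) ^ card (S - T - W)"
      by (intro Suc.IH)
    then show "(case TW of (T, W) \<Rightarrow> extrap_neg1 d (?c (S - T - W))) =
        (case TW of (T, W) \<Rightarrow> (-1) ^ card (S - T - W))"
      by (simp add: TW_eq)
  qed
  also have "\<dots> = ?no_edge - (-1) ^ card S"
  proof -
    let ?sgn = "\<lambda>(T, W). (-1 :: 'a) ^ card (S - T - W)"
    have "sum ?sgn ?P = (-1) ^ card S + sum ?sgn (?P - {({}, {})})"
      using sum.remove[OF finP empty, of ?sgn] by simp
    moreover have "sum ?sgn ?P = ?no_edge"
      by (rule sum_disjoint_pairs_sinks_sources_sign[OF fin extremal[rule_format, OF Suc.prems(1)]])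
    ultimately show ?thesis by (simp add: eq_diff_eq add.commute)
  qed
  finally have "extrap_neg1 d (\<lambda>m. ?c S (Suc m) - ?c S m) = ?no_edge - (-1) ^ card S" .
  moreover have "?c S 0 = ?no_edge" by (simp add: card_colorings_0[OF fin])
  ultimately show ?case by simp
qed

section \<open>Acyclic orientations\<close>

lemma finite_range_repeats:
  fixes f :: "nat \<Rightarrow> 'a"
  assumes "finite X" "\<And>k. f k \<in> X"
  shows "\<exists>i l. i < l \<and> f i = f l"
proof -
  have "range f \<subseteq> X" using assms(2) by blast
  then have "finite (range f)" using assms(1) by (rule finite_subset)
  then have "\<not> inj f" using finite_imageD infinite_UNIV_nat by blast
  then obtain i l where "i \<noteq> l" "f i = f l" unfolding inj_def by blast
  then show ?thesis by (metis linorder_neqE_nat)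
qed

definition incident :: "nat \<Rightarrow> sedge \<Rightarrow> bool" where
  "incident v e \<longleftrightarrow> e_u e = v \<or> e_w e = v"

definition other_end :: "nat \<Rightarrow> sedge \<Rightarrow> nat" where
  "other_end v e = (if e_u e = v then e_w e else e_u e)"

lemma incident_other_end: "incident v e \<Longrightarrow> incident (other_end v e) e"
  and connects_other_end: "incident v e \<Longrightarrow> connects e v (other_end v e)"
  unfolding incident_def other_end_def connects_def by auto

lemma incident_if_arrow_in: "arrow_in v e \<Longrightarrow> incident v e"
  and incident_if_arrow_out: "arrow_out v e \<Longrightarrow> incident v e"
  and arrow_out_if_not_in: "incident v e \<Longrightarrow> \<not> arrow_in v e \<Longrightarrow> arrow_out v e"
  unfolding incident_def arrow_in_def arrow_out_def by auto

lemma alternating_closed_walk_is_cycle: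
  fixes vs js :: "nat \<Rightarrow> nat"
  assumes step: "\<And>k. js (Suc k) < length (snd P) \<and>
      connects (snd P ! js (Suc k)) (vs k) (vs (Suc k))"
    and alternate: "\<And>k. (arrow_in (vs k) (snd P ! js k) \<and> arrow_out (vs k) (snd P ! js (Suc k))) \<or>
                        (arrow_out (vs k) (snd P ! js k) \<and> arrow_in (vs k) (snd P ! js (Suc k)))"
    and closed: "i < l" "vs l = vs i" "js l = js i"
  shows "is_cycle P (map vs [i..<l]) (map (js \<circ> Suc) [i..<l])"
proof -
  let ?vs = "map vs [i..<l]" and ?es = "map (js \<circ> Suc) [i..<l]"
  have wrap: "?vs ! (Suc t mod length ?vs) = vs (Suc (i + t))" if "t < l - i" for t
  proof (cases "Suc t < l - i")
    case False
    then have "Suc t = l - i" "Suc (i + t) = l" using that by simp_all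
    then show ?thesis using closed by simp
  qed simp
  have "closed_walk P ?vs ?es"
    unfolding closed_walk_def using closed(1) step wrap by auto
  moreover have "(\<exists>j\<in>set ?es. arrow_in v (snd P ! j)) \<and> (\<exists>j\<in>set ?es. arrow_out v (snd P ! j))"
    if "v \<in> set ?vs" for v
  proof -
    have "v \<in> vs ` {i..<l}" using that by simp
    then obtain k where k: "i \<le> k" "k < l" "v = vs k" by auto
    have out_edge: "js (Suc k) \<in> set ?es" using k by auto
    have in_edge: "js k \<in> set ?es"
    proof (cases "k = i")
      case True
      then show ?thesis using closed by (auto intro!: image_eqI[of _ _ "l - 1"])
    next
      case False
      then show ?thesis using k by (auto intro!: image_eqI[of _ _ "k - 1"])
    qed
    show ?thesis using alternate[of k] in_edge out_edge unfolding k(3) by auto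
  qed
  ultimately show ?thesis unfolding is_cycle_def by simp
qed

(* Walk along induced edges, leaving each vertex by an edge whose arrow there is opposite to
   that of the edge the walk came in on; the states (vertex, edge) repeat, and the closed
   segment between two repetitions is a cycle. *)
lemma cycle_if_in_and_out_arrows:
  fixes P :: sgraph
  defines "E \<equiv> snd P"
  assumes "finite S"
    and start: "j0 < length E" "induced_edge S (E ! j0)"
    and in_out: "\<And>v j. j < length E \<Longrightarrow> induced_edge S (E ! j) \<Longrightarrow> incident v (E ! j) \<Longrightarrow>
        (\<exists>j'<length E. induced_edge S (E ! j') \<and> arrow_in v (E ! j')) \<and>
        (\<exists>j'<length E. induced_edge S (E ! j') \<and> arrow_out v (E ! j'))"
  shows "\<exists>vs es. is_cycle P vs es"
proof -
  define ok where "ok x \<longleftrightarrow> snd x < length E \<and> induced_edge S (E ! snd x) \<and>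
      incident (fst x) (E ! snd x)"
    for x :: "nat \<times> nat"
  define alt where "alt v j j' \<longleftrightarrow> (arrow_in v (E ! j) \<and> arrow_out v (E ! j')) \<or>
                                   (arrow_out v (E ! j) \<and> arrow_in v (E ! j'))" for v j j'
  define walk_step where "walk_step x y \<longleftrightarrow> incident (fst x) (E ! snd y) \<and>
      alt (fst x) (snd x) (snd y) \<and> fst y = other_end (fst x) (E ! snd y)" for x y :: "nat \<times> nat"
  have "\<exists>y. ok y \<and> walk_step x y" if "ok x" for x
  proof -
    obtain v j where x: "x = (v, j)" by (cases x)
    have j: "j < length E" "induced_edge S (E ! j)" "incident v (E ! j)"
      using that unfolding ok_def x by simp_all
    obtain j' where j': "j' < length E" "induced_edge S (E ! j')" "alt v j j'"
    proof (cases "arrow_in v (E ! j)")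
      case True
      then show ?thesis using in_out[OF j] that unfolding alt_def by blast
    next
      case False
      then have "arrow_out v (E ! j)" using j(3) by (rule arrow_out_if_not_in[rotated])
      then show ?thesis using False in_out[OF j] that unfolding alt_def by blast
    qed
    then have "incident v (E ! j')" unfolding alt_def
      using incident_if_arrow_in incident_if_arrow_out by blast
    then have "ok (other_end v (E ! j'), j') \<and> walk_step x (other_end v (E ! j'), j')"
      using j' incident_other_end unfolding ok_def walk_step_def x by simp
    then show ?thesis by blast
  qed
  moreover have "ok (e_u (E ! j0), j0)" using start unfolding ok_def incident_def by simp
  ultimately obtain f where f: "\<And>k. ok (f k)" "\<And>k. walk_step (f k) (f (Suc k))"
    using dependent_nat_choice[of "\<lambda>_. ok" "\<lambda>_. walk_step"] by blast
  have "f k \<in> S \<times> {..<length E}" for k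
    using f(1)[of k] unfolding ok_def induced_edge_def incident_def by (cases "f k") auto
  then obtain i l where "i < l" "f i = f l"
    using finite_range_repeats[of "S \<times> {..<length E}" f] \<open>finite S\<close> by blast
  moreover have "snd (f (Suc k)) < length E \<and>
      connects (E ! snd (f (Suc k))) (fst (f k)) (fst (f (Suc k)))"
    for k using f[of k] f(1)[of "Suc k"] connects_other_end unfolding ok_def walk_step_def by simp
  moreover have "alt (fst (f k)) (snd (f k)) (snd (f (Suc k)))" for k
    using f(2)[of k] unfolding walk_step_def by simp
  ultimately show ?thesis
    using alternating_closed_walk_is_cycle[of "snd \<circ> f" P "fst \<circ> f" i l]
    unfolding E_def alt_def by auto
qed

lemma signed_poset_sinks_ne_sources:
  assumes sp: "signed_poset P" and S: "S \<subseteq> {0..<fst P}" and edge: "\<exists>e\<in>set (snd P). induced_edge S e"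
  shows "sinks_on (snd P) S \<noteq> sources_on (snd P) S"
proof
  let ?E = "snd P"
  assume eq: "sinks_on ?E S = sources_on ?E S"
  have "(\<exists>j'<length ?E. induced_edge S (?E ! j') \<and> arrow_in v (?E ! j')) \<and>
        (\<exists>j'<length ?E. induced_edge S (?E ! j') \<and> arrow_out v (?E ! j'))"
    if j: "j < length ?E" "induced_edge S (?E ! j)" "incident v (?E ! j)" for v j
  proof -
    have "v \<in> S" using j(2,3) unfolding induced_edge_def incident_def by auto
    have "v \<notin> sinks_on ?E S \<inter> sources_on ?E S"
      using j unfolding sinks_on_def sources_on_def incident_def by (auto dest: nth_mem)
    then have "v \<notin> sinks_on ?E S" "v \<notin> sources_on ?E S" using eq by auto
    then obtain e e' where "e \<in> set ?E" "induced_edge S e" "arrow_out v e"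
        "e' \<in> set ?E" "induced_edge S e'" "arrow_in v e'"
      using \<open>v \<in> S\<close> unfolding sinks_on_def sources_on_def arrow_in_def arrow_out_def by blast
    then show ?thesis by (metis in_set_conv_nth)
  qed
  moreover obtain j0 where "j0 < length ?E" "induced_edge S (?E ! j0)"
    using edge by (metis in_set_conv_nth)
  moreover have "finite S" using S finite_subset by blast
  ultimately obtain vs es where "is_cycle P vs es" using cycle_if_in_and_out_arrows by metis
  then show False using sp unfolding signed_poset_def by blast
qed

section \<open>The specialization\<close>

lemma proper_preserves_iff:
  "proper P xs \<and> preserves P xs \<longleftrightarrow>
     length xs = fst P \<and> (\<forall>e\<in>set (snd P). respects_edge e (xs ! e_u e) (xs ! e_w e))"
  unfolding proper_def preserves_def respects_edge_def by auto

lemma admissible_on_iff_proper_preserves: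
  assumes "is_oriented P"
  shows "admissible_on (snd P) {0..<fst P} k \<longleftrightarrow>
           proper P (map k [0..<fst P]) \<and> preserves P (map k [0..<fst P])"
proof -
  have "e_u e < fst P" "e_w e < fst P" if "e \<in> set (snd P)" for e
    using assms that unfolding is_oriented_def by blast+
  then show ?thesis
    unfolding proper_preserves_iff admissible_on_def induced_edge_def by auto
qed

lemma bij_betw_colorings_lists:
  assumes "is_oriented P"
  shows "bij_betw (\<lambda>k. map k [0..<fst P]) (colorings (snd P) {0..<fst P} m)
           {xs. proper P xs \<and> preserves P xs \<and> set xs \<subseteq> {- int m..int m}}"
proof (rule bij_betw_byWitness[where f' = "\<lambda>xs. restrict (\<lambda>v. xs ! v) {0..<fst P}"])
  let ?n = "fst P"
  show "\<forall>k\<in>colorings (snd P) {0..<?n} m. restrict (\<lambda>v. map k [0..<?n] ! v) {0..<?n} = k"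
    unfolding colorings_def by (auto simp: PiE_iff extensional_def restrict_def)
  show "\<forall>xs\<in>{xs. proper P xs \<and> preserves P xs \<and> set xs \<subseteq> {- int m..int m}}.
          map (restrict (\<lambda>v. xs ! v) {0..<?n}) [0..<?n] = xs"
    unfolding proper_def by (auto simp: list_eq_iff_nth_eq)
  show "(\<lambda>k. map k [0..<?n]) ` colorings (snd P) {0..<?n} m
          \<subseteq> {xs. proper P xs \<and> preserves P xs \<and> set xs \<subseteq> {- int m..int m}}"
    using admissible_on_iff_proper_preserves[OF assms] unfolding colorings_def
    by (auto simp: PiE_iff)
  show "(\<lambda>xs. restrict (\<lambda>v. xs ! v) {0..<?n}) ` {xs. proper P xs \<and> preserves P xs \<and>
      set xs \<subseteq> {- int m..int m}}
          \<subseteq> colorings (snd P) {0..<?n} m"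
  proof clarify
    fix xs assume xs: "proper P xs" "preserves P xs" "set xs \<subseteq> {- int m..int m}"
    then have len: "length xs = ?n" unfolding proper_def by simp
    then have "map (restrict (\<lambda>v. xs ! v) {0..<?n}) [0..<?n] = xs"
      by (simp add: list_eq_iff_nth_eq)
    then have "admissible_on (snd P) {0..<?n} (restrict (\<lambda>v. xs ! v) {0..<?n})"
      using admissible_on_iff_proper_preserves[OF assms] xs by simp
    moreover have "xs ! v \<in> {- int m..int m}" if "v < ?n" for v
      using xs(3) nth_mem[of v xs] that unfolding len by blast
    ultimately show "restrict (\<lambda>v. xs ! v) {0..<?n} \<in> colorings (snd P) {0..<?n} m"
      unfolding colorings_def by auto
  qed
qed

(* specialize D f m is the image of the part of f of degree at most D under x_c := -1 for
   |c| <= m, x_(m+1) := t - 1, x_(-m-1) := 0 and x_c := 0 for |c| > m + 1 (such monomials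
   are not in bounded_monomials D m). *)
definition spec_weight :: "nat \<Rightarrow> int \<Rightarrow> rat poly" where
  "spec_weight m c = (if c = int m + 1 then [:-1, 1:] else if c = - (int m + 1) then 0 else -1)"

definition spec_monomial :: "nat \<Rightarrow> int multiset \<Rightarrow> rat poly" where
  "spec_monomial m M = (\<Prod>c\<in>#M. spec_weight m c)"

definition bounded_monomials :: "nat \<Rightarrow> nat \<Rightarrow> int multiset set" where
  "bounded_monomials D m = {M. size M \<le> D \<and> set_mset M \<subseteq> {- int (Suc m)..int (Suc m)}}"

definition specialize :: "nat \<Rightarrow> fps_Z \<Rightarrow> nat \<Rightarrow> rat poly" where
  "specialize D f m = (\<Sum>M\<in>bounded_monomials D m. smult (f M) (spec_monomial m M))"

lemma finite_bounded_monomials: "finite (bounded_monomials D m)"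
proof (rule finite_subset)
  let ?R = "{- int (Suc m)..int (Suc m)}"
  show "bounded_monomials D m \<subseteq> mset ` {xs. set xs \<subseteq> ?R \<and> length xs \<le> D}"
  proof
    fix M assume M: "M \<in> bounded_monomials D m"
    obtain xs where "mset xs = M" using ex_mset by blast
    then show "M \<in> mset ` {xs. set xs \<subseteq> ?R \<and> length xs \<le> D}"
      using M unfolding bounded_monomials_def by auto
  qed
  show "finite (mset ` {xs. set xs \<subseteq> ?R \<and> length xs \<le> D})"
    by (intro finite_imageI finite_lists_length_le) simp
qed

lemma spec_monomial_mset_map:
  "spec_monomial m (mset (map k [0..<n])) = (\<Prod>v\<in>{0..<n}. spec_weight m (k v))"
proof -
  have "spec_monomial m (mset (map k [0..<n])) = (\<Prod>v\<leftarrow>[0..<n]. spec_weight m (k v))"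
    unfolding spec_monomial_def by (simp add: prod_mset_prod_list comp_def flip: mset_map)
  also have "\<dots> = (\<Prod>v\<in>{0..<n}. spec_weight m (k v))"
    by (metis atLeastLessThan_upt distinct_upt prod.distinct_set_conv_list)
  finally show ?thesis .
qed

lemma specialize_Y:
  assumes "is_oriented P" "fst P \<le> D"
  shows "specialize D (Y P) m =
           (\<Sum>k\<in>colorings (snd P) {0..<fst P} (Suc m). \<Prod>v\<in>{0..<fst P}. spec_weight m (k v))"
proof -
  let ?L = "{xs. proper P xs \<and> preserves P xs \<and> set xs \<subseteq> {- int (Suc m)..int (Suc m)}}"
  have finL: "finite ?L"
    by (rule finite_subset[of _ "{xs. set xs \<subseteq> {- int (Suc m)..int (Suc m)} \<and> length xs = fst P}"])
       (auto simp: proper_def intro: finite_lists_length_eq)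
  have "specialize D (Y P) m =
      (\<Sum>M\<in>bounded_monomials D m. \<Sum>xs\<in>{xs\<in>?L. mset xs = M}. spec_monomial m (mset xs))"
    unfolding specialize_def
  proof (rule sum.cong[OF refl])
    fix M assume "M \<in> bounded_monomials D m"
    then have "{xs\<in>?L. mset xs = M} = {xs. proper P xs \<and> preserves P xs \<and> mset xs = M}"
      unfolding bounded_monomials_def by auto
    then show "smult (Y P M) (spec_monomial m M) =
        (\<Sum>xs\<in>{xs\<in>?L. mset xs = M}. spec_monomial m (mset xs))"
      by (simp add: Y_def of_nat_mult_conv_smult)
  qed
  also have "\<dots> = (\<Sum>xs\<in>?L. spec_monomial m (mset xs))"
    using assms(2) by (intro sum.group finL finite_bounded_monomials)
      (auto simp: bounded_monomials_def proper_def)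
  also have "\<dots> =
      (\<Sum>k\<in>colorings (snd P) {0..<fst P} (Suc m). spec_monomial m (mset (map k [0..<fst P])))"
    by (rule sum.reindex_bij_betw[OF bij_betw_colorings_lists[OF assms(1)], symmetric])
  finally show ?thesis by (simp only: spec_monomial_mset_map)
qed

lemma spec_weight_inner: "\<bar>c\<bar> \<le> int m \<Longrightarrow> spec_weight m c = -1"
  unfolding spec_weight_def by auto

definition level_weight :: "nat set \<Rightarrow> nat set \<Rightarrow> nat set \<Rightarrow> rat poly" where
  "level_weight V T W = (if W = {} then [:-1, 1:] ^ card T * (-1) ^ card (V - T) else 0)"

lemma prod_spec_weight_extend_coloring:
  assumes k: "k \<in> colorings E (V - T - W) m" and "finite V" "T \<subseteq> V" "W \<subseteq> V" "T \<inter> W = {}"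
  shows "(\<Prod>v\<in>V. spec_weight m (extend_coloring T W (int (Suc m)) k v)) = level_weight V T W"
proof (cases "W = {}")
  case False
  then obtain w where "w \<in> W" by blast
  then have "spec_weight m (extend_coloring T W (int (Suc m)) k w) = 0"
    using assms(5) by (auto simp: extend_coloring_def spec_weight_def)
  then have "(\<Prod>v\<in>V. spec_weight m (extend_coloring T W (int (Suc m)) k v)) = 0"
    using \<open>w \<in> W\<close> assms(2,4) by (simp add: prod_zero_iff) blast
  then show ?thesis using False by (simp add: level_weight_def)
next
  case True
  have "spec_weight m (extend_coloring T W (int (Suc m)) k v) = (if v \<in> T then [:-1, 1:] else -1)"
    if "v \<in> V" for v
  proof (cases "v \<in> T")
    case False
    then have "\<bar>k v\<bar> \<le> int m"
      using k that True unfolding colorings_def by (force simp: PiE_iff abs_le_iff)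
    then show ?thesis using False True by (simp add: extend_coloring_def spec_weight_inner)
  qed (simp add: extend_coloring_def spec_weight_def)
  then have "(\<Prod>v\<in>V. spec_weight m (extend_coloring T W (int (Suc m)) k v)) =
      (\<Prod>v\<in>V. if v \<in> T then [:-1, 1:] else -1)"
    by (rule prod.cong[OF refl])
  also have "\<dots> = [:-1, 1:] ^ card T * (-1) ^ card (V - T)"
    using assms(2,3) by (simp add: prod.If_cases Int_absorb1 Diff_eq)
  finally show ?thesis using True by (simp add: level_weight_def)
qed

lemma sum_Pow_power_card:
  fixes q :: "'a::comm_semiring_1"
  assumes "finite A"
  shows "(\<Sum>X\<in>Pow A. q ^ card X) = (q + 1) ^ card A"
  using prod_add[OF assms, of "\<lambda>_. q" "\<lambda>_. 1"] by simp

lemma well_oriented_if_is_oriented: "is_oriented P \<Longrightarrow> well_oriented (snd P)"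
  unfolding is_oriented_def well_oriented_def by blast

lemma sinks_eq_card_sinks_on: "is_oriented P \<Longrightarrow> sinks P = card (sinks_on (snd P) {0..<fst P})"
  unfolding sinks_def sinks_on_def is_oriented_def induced_edge_def
  by (rule arg_cong[where f = card]) auto

lemma specialize_Y_level_weights:
  assumes io: "is_oriented P" and D: "fst P \<le> D"
  defines "V \<equiv> {0..<fst P}" and "E \<equiv> snd P"
  shows "specialize D (Y P) = (\<lambda>m. \<Sum>(T, W)\<in>disjoint_pairs (sinks_on E V) (sources_on E V).
           level_weight V T W * of_nat (card (colorings E (V - T - W) m)))"
proof
  fix m
  have "specialize D (Y P) m = (\<Sum>(T, W)\<in>disjoint_pairs (sinks_on E V) (sources_on E V).
      \<Sum>k\<in>colorings E (V - T - W) m. \<Prod>v\<in>V. spec_weight m (extend_coloring T W (int (Suc m)) k v))"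
    unfolding specialize_Y[OF io D] V_def E_def
    by (rule sum_colorings_Suc[OF well_oriented_if_is_oriented[OF io] finite_atLeastLessThan])
  also have "\<dots> = (\<Sum>(T, W)\<in>disjoint_pairs (sinks_on E V) (sources_on E V).
      level_weight V T W * of_nat (card (colorings E (V - T - W) m)))"
  proof (intro sum.cong refl, clarify)
    fix T W assume "(T, W) \<in> disjoint_pairs (sinks_on E V) (sources_on E V)"
    then have "T \<subseteq> V" "W \<subseteq> V" "T \<inter> W = {}"
      using sinks_on_subset[of E V] sources_on_subset[of E V] unfolding disjoint_pairs_def by auto
    then show "(\<Sum>k\<in>colorings E (V - T - W) m.
          \<Prod>v\<in>V. spec_weight m (extend_coloring T W (int (Suc m)) k v)) =
        level_weight V T W * of_nat (card (colorings E (V - T - W) m))"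
      using prod_spec_weight_extend_coloring[OF _ finite_atLeastLessThan] unfolding V_def
      by (simp add: mult.commute)
  qed
  finally show "specialize D (Y P) m = (\<Sum>(T, W)\<in>disjoint_pairs (sinks_on E V) (sources_on E V).
      level_weight V T W * of_nat (card (colorings E (V - T - W) m)))" .
qed

lemma sum_level_weight_sign:
  assumes "finite V" "A \<subseteq> V" "finite B"
  shows "(\<Sum>(T, W)\<in>disjoint_pairs A B. level_weight V T W * (-1) ^ card (V - T - W)) =
      monom 1 (card A)"
proof -
  have finA: "finite A" using assms finite_subset by blast
  have "(\<Sum>W\<in>Pow (B - T). level_weight V T W * (-1) ^ card (V - T - W)) = [:-1, 1:] ^ card T" for T
  proof -
    have "(\<Sum>W\<in>Pow (B - T). level_weight V T W * (-1) ^ card (V - T - W)) =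
        level_weight V T {} * (-1) ^ card (V - T)"
      using assms(3)
      by (subst sum.remove[of _ "{}"]) (auto simp: level_weight_def intro!: sum.neutral)
    also have "\<dots> = [:-1, 1:] ^ card T"
      by (simp add: level_weight_def power_mult_distrib[symmetric])
    finally show ?thesis .
  qed
  then have "(\<Sum>(T, W)\<in>disjoint_pairs A B. level_weight V T W * (-1) ^ card (V - T - W)) =
      (\<Sum>T\<in>Pow A. [:-1, 1:] ^ card T)"
    by (simp add: sum_disjoint_pairs_eq(1)[OF finA assms(3)])
  also have "\<dots> = ([:-1, 1:] + 1) ^ card A"
    by (rule sum_Pow_power_card[OF finA])
  also have "\<dots> = monom 1 1 ^ card A"
    by (simp add: monom_altdef one_pCons)
  finally show ?thesis by (simp add: monom_power)
qed

lemma extrap_specialize_Y: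
  assumes sp: "signed_poset P" and D: "fst P \<le> D"
  shows "extrap_neg1 D (specialize D (Y P)) = monom 1 (sinks P)"
proof -
  let ?V = "{0..<fst P}" and ?E = "snd P"
  let ?A = "sinks_on ?E ?V" and ?B = "sources_on ?E ?V"
  have io: "is_oriented P" using sp unfolding signed_poset_def by blast
  have finA: "finite ?A" and finB: "finite ?B"
    using finite_subset[OF sinks_on_subset] finite_subset[OF sources_on_subset] by blast+
  have extremal: "\<forall>S\<subseteq>?V. (\<exists>e\<in>set ?E. induced_edge S e) \<longrightarrow> sinks_on ?E S \<noteq> sources_on ?E S"
    using signed_poset_sinks_ne_sources[OF sp] by blast
  have "extrap_neg1 D (specialize D (Y P)) = (\<Sum>(T, W)\<in>disjoint_pairs ?A ?B.
      level_weight ?V T W * extrap_neg1 D (\<lambda>m. of_nat (card (colorings ?E (?V - T - W) m))))"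
    using finite_disjoint_pairs[OF finA finB]
    by (simp add: specialize_Y_level_weights[OF io D] extrap_neg1_sum extrap_neg1_mult_left
      case_prod_unfold)
  also have "\<dots> = (\<Sum>(T, W)\<in>disjoint_pairs ?A ?B. level_weight ?V T W * (-1) ^ card (?V - T - W))"
  proof (intro sum.cong refl, clarify)
    fix T W
    have sub: "?V - T - W \<subseteq> ?V" by blast
    then have "card (?V - T - W) \<le> D" using D card_mono[OF finite_atLeastLessThan sub] by simp
    with sub have "extrap_neg1 D (\<lambda>m. of_nat (card (colorings ?E (?V - T - W) m))) =
        ((-1) ^ card (?V - T - W) :: rat poly)"
      using extrap_neg1_card_colorings[OF well_oriented_if_is_oriented[OF io]
        finite_atLeastLessThan extremal]
      by blast
    then show "level_weight ?V T W *
          extrap_neg1 D (\<lambda>m. of_nat (card (colorings ?E (?V - T - W) m))) =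
        level_weight ?V T W * (-1) ^ card (?V - T - W)"
      by simp
  qed
  also have "\<dots> = monom 1 (card ?A)"
    by (rule sum_level_weight_sign[OF finite_atLeastLessThan sinks_on_subset finB])
  finally show ?thesis by (simp add: sinks_eq_card_sinks_on[OF io])
qed

lemma smult_sum_right: "smult c (\<Sum>i\<in>I. f i) = (\<Sum>i\<in>I. smult c (f i))"
  by (induction I rule: infinite_finite_induct) (simp_all add: smult_add_right)

lemma specialize_lin_comb:
  "specialize D (lin_comb Ps cs) m = (\<Sum>j<length Ps. smult (cs ! j) (specialize D (Y (Ps ! j)) m))"
  unfolding specialize_def lin_comb_def
  by (simp add: smult_sum smult_sum_right sum.swap[of _ "bounded_monomials D m"])

lemma extrap_specialize_lin_comb:
  assumes "\<forall>P\<in>set Ps. signed_poset P" "\<forall>P\<in>set Ps. fst P \<le> D"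
  shows "extrap_neg1 D (specialize D (lin_comb Ps cs)) =
      (\<Sum>j<length Ps. monom (cs ! j) (sinks (Ps ! j)))"
proof -
  have "specialize D (lin_comb Ps cs) =
      (\<lambda>m. \<Sum>j<length Ps. smult (cs ! j) (specialize D (Y (Ps ! j)) m))"
    by (rule ext) (rule specialize_lin_comb)
  then have "extrap_neg1 D (specialize D (lin_comb Ps cs)) =
      (\<Sum>j<length Ps. smult (cs ! j) (extrap_neg1 D (specialize D (Y (Ps ! j)))))"
    by (simp add: extrap_neg1_sum extrap_neg1_smult)
  also have "\<dots> = (\<Sum>j<length Ps. monom (cs ! j) (sinks (Ps ! j)))"
    using assms by (intro sum.cong refl) (simp add: extrap_specialize_Y smult_monom)
  finally show ?thesis .
qed

lemma specialize_p:
  assumes a: "1 \<le> a" and b: "1 \<le> b" and D: "a + b \<le> D"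
  shows "specialize D (p a b) m = of_nat (2 * m + 1) * (-1) ^ (a + b)"
proof -
  define R where "R = {- int (Suc m)..int (Suc m)}"
  define mono where "mono i = replicate_mset a i + replicate_mset b (- i)" for i :: int
  have in_R: "i \<in> R" if "mono i \<in> bounded_monomials D m" for i
    using that a unfolding bounded_monomials_def mono_def R_def by auto
  have "specialize D (p a b) m =
      (\<Sum>M\<in>bounded_monomials D m. \<Sum>i\<in>{i\<in>R. mono i = M}. spec_monomial m (mono i))"
    unfolding specialize_def
  proof (rule sum.cong[OF refl])
    fix M assume "M \<in> bounded_monomials D m"
    then have "{i. mono i = M} = {i\<in>R. mono i = M}" using in_R by auto
    then show "smult (p a b M) (spec_monomial m M) =
        (\<Sum>i\<in>{i\<in>R. mono i = M}. spec_monomial m (mono i))"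
      unfolding p_def mono_def[symmetric] by (simp add: of_nat_mult_conv_smult)
  qed
  also have "\<dots> = (\<Sum>i\<in>R. spec_monomial m (mono i))"
  proof (rule sum.group)
    show "mono ` R \<subseteq> bounded_monomials D m"
      using D unfolding R_def mono_def bounded_monomials_def by (auto split: if_splits)
  qed (simp_all add: R_def finite_bounded_monomials)
  also have "\<dots> = (\<Sum>i\<in>R. if \<bar>i\<bar> \<le> int m then (-1) ^ (a + b) else 0)"
  proof (rule sum.cong[OF refl])
    fix i assume "i \<in> R"
    have "spec_monomial m (mono i) = spec_weight m i ^ a * spec_weight m (- i) ^ b"
      unfolding spec_monomial_def mono_def by simp
    moreover have "spec_weight m i = 0 \<or> spec_weight m (- i) = 0" if "\<not> \<bar>i\<bar> \<le> int m"
      using \<open>i \<in> R\<close> that unfolding R_def spec_weight_def by auto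
    ultimately show "spec_monomial m (mono i) = (if \<bar>i\<bar> \<le> int m then (-1) ^ (a + b) else 0)"
      using a b by (auto simp: spec_weight_inner power_add)
  qed
  also have "\<dots> = (\<Sum>i\<in>{i\<in>R. \<bar>i\<bar> \<le> int m}. (-1) ^ (a + b))"
    by (rule sum.inter_filter[symmetric]) (simp add: R_def)
  also have "{i\<in>R. \<bar>i\<bar> \<le> int m} = {- int m..int m}"
    unfolding R_def by auto
  finally show ?thesis by simp
qed

lemma extrap_specialize_p:
  assumes "1 \<le> a" "1 \<le> b" "a + b \<le> D"
  shows "extrap_neg1 D (specialize D (p a b)) = - ((-1) ^ (a + b))"
proof -
  have "specialize D (p a b) = (\<lambda>m. (-1) ^ (a + b) * (2 * of_nat m + 1))"
    by (rule ext) (simp add: specialize_p[OF assms] mult.commute)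
  moreover have "extrap_neg1 D (\<lambda>m. 2 * of_nat m + 1 :: rat poly) = -1"
    using assms extrap_neg1_of_nat[of D, where 'a = "rat poly"]
    by (simp add: extrap_neg1_add extrap_neg1_mult_left extrap_neg1_const)
  ultimately show ?thesis by (simp add: extrap_neg1_mult_left)
qed

section \<open>p_(a,b) as a combination of signed paths\<close>

lemma lin_comb_conv_sum_list:
  "length cs = length Ps \<Longrightarrow> lin_comb Ps cs M = (\<Sum>(c, P)\<leftarrow>zip cs Ps. c * Y P M)"
  unfolding lin_comb_def by (simp add: sum_list_sum_nth atLeast0LessThan)

lemma inY_Y: "signed_poset P \<Longrightarrow> inY (Y P)"
  unfolding inY_def by (intro exI[of _ "[P]"] exI[of _ "[1]"]) (auto simp: lin_comb_def)

lemma inY_diff: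
  assumes "inY f" "inY g"
  shows "inY (\<lambda>M. f M - g M)"
proof -
  obtain Ps cs where f: "\<forall>P\<in>set Ps. signed_poset P" "length cs = length Ps" "f = lin_comb Ps cs"
    using assms(1) unfolding inY_def by blast
  obtain Qs ds where g: "\<forall>P\<in>set Qs. signed_poset P" "length ds = length Qs" "g = lin_comb Qs ds"
    using assms(2) unfolding inY_def by blast
  have "(\<Sum>(c, P)\<leftarrow>zip (map uminus ds) Qs. c * Y P M) = - (\<Sum>(c, P)\<leftarrow>zip ds Qs. c * Y P M)" for M
    by (induction ds Qs rule: list_induct2') simp_all
  then have "(\<lambda>M. f M - g M) = lin_comb (Ps @ Qs) (cs @ map uminus ds)"
    using f(2,3) g(2,3) by (auto simp: lin_comb_conv_sum_list)
  then show ?thesis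
    unfolding inY_def using f(1,2) g(1,2)
    by (intro exI[of _ "Ps @ Qs"] exI[of _ "cs @ map uminus ds"]) auto
qed

(* It is negative exactly at the junction
   j = a - 1 between the a copies of i and the b copies of -i in x_i^a x_(-i)^b; tied a j
   describes the colors at j and j + 1 in such a monomial, and the two orientations of
   path_edge a j cover the remaining cases. *)
definition path_edge :: "nat \<Rightarrow> nat \<Rightarrow> bool \<Rightarrow> sedge" where
  "path_edge a j d = (j, Suc j, j \<noteq> a - 1, d, if j \<noteq> a - 1 then \<not> d else d)"

definition tied :: "nat \<Rightarrow> nat \<Rightarrow> int \<Rightarrow> int \<Rightarrow> bool" where
  "tied a j x y \<longleftrightarrow> (if j = a - 1 then x = - y else x = y)"

lemma path_edge_simps [simp]:
  "e_u (path_edge a j d) = j" "e_w (path_edge a j d) = Suc j"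
  "e_pos (path_edge a j d) = (j \<noteq> a - 1)"
  "e_au (path_edge a j d) = d" "e_aw (path_edge a j d) = (if j \<noteq> a - 1 then \<not> d else d)"
  unfolding path_edge_def e_u_def e_w_def e_pos_def e_au_def e_aw_def by simp_all

lemma tied_trichotomy:
  "tied a j x y \<longleftrightarrow>
     \<not> respects_edge (path_edge a j True) x y \<and> \<not> respects_edge (path_edge a j False) x y"
  "\<not> (respects_edge (path_edge a j True) x y \<and> respects_edge (path_edge a j False) x y)"
  unfolding tied_def respects_edge_def e_sgn_def by auto

definition path_count :: "nat \<Rightarrow> nat \<Rightarrow> sedge list \<Rightarrow> nat set \<Rightarrow> int multiset \<Rightarrow> nat" where
  "path_count a n Es J M = card {k. length k = n \<and>
      (\<forall>e\<in>set Es. respects_edge e (k ! e_u e) (k ! e_w e)) \<and>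
                                   (\<forall>j\<in>J. tied a j (k ! j) (k ! Suc j)) \<and> mset k = M}"

lemma finite_lists_mset: "finite {k. length k = n \<and> Q k \<and> mset k = M}"
  by (rule finite_subset[of _ "{k. set k \<subseteq> set_mset M \<and> length k = n}"])
     (auto intro: finite_lists_length_eq)

lemma path_count_insert:
  "(of_nat (path_count a n Es (insert j J) M) :: rat) =
     of_nat (path_count a n Es J M) - of_nat (path_count a n (path_edge a j True # Es) J M)
       - of_nat (path_count a n (path_edge a j False # Es) J M)"
proof -
  define A where "A = {k. length k = n \<and> ((\<forall>e\<in>set Es. respects_edge e (k ! e_u e) (k ! e_w e)) \<and>
                        (\<forall>j\<in>J. tied a j (k ! j) (k ! Suc j))) \<and> mset k = M}"
  let ?sat = "\<lambda>d k. respects_edge (path_edge a j d) (k ! j) (k ! Suc j)"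
  have "finite A" unfolding A_def by (rule finite_lists_mset)
  moreover have "A =
      {k\<in>A. tied a j (k ! j) (k ! Suc j)} \<union> ({k\<in>A. ?sat True k} \<union> {k\<in>A. ?sat False k})"
    using tied_trichotomy(1) by blast
  moreover have
    "{k\<in>A. tied a j (k ! j) (k ! Suc j)} \<inter> ({k\<in>A. ?sat True k} \<union> {k\<in>A. ?sat False k}) = {}"
    "{k\<in>A. ?sat True k} \<inter> {k\<in>A. ?sat False k} = {}"
    using tied_trichotomy by blast+
  ultimately have "card A = card {k\<in>A. tied a j (k ! j) (k ! Suc j)} +
      (card {k\<in>A. ?sat True k} + card {k\<in>A. ?sat False k})"
    by (metis (no_types, lifting) card_Un_disjoint finite_Un)
  moreover have "path_count a n Es J M = card A"
    "path_count a n Es (insert j J) M = card {k\<in>A. tied a j (k ! j) (k ! Suc j)}"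
    "path_count a n (path_edge a j True # Es) J M = card {k\<in>A. ?sat True k}"
    "path_count a n (path_edge a j False # Es) J M = card {k\<in>A. ?sat False k}"
    unfolding path_count_def A_def by (auto intro!: arg_cong[where f = card])
  ultimately show ?thesis by simp
qed

definition path_edges :: "nat \<Rightarrow> nat \<Rightarrow> sedge list \<Rightarrow> bool" where
  "path_edges a n Es \<longleftrightarrow> (\<forall>e\<in>set Es. \<exists>j d. Suc j < n \<and> e = path_edge a j d) \<and>
     (\<forall>e1\<in>set Es. \<forall>e2\<in>set Es. e_u e1 = e_u e2 \<longrightarrow> e1 = e2)"

lemma path_edges_no_cycle:
  assumes path: "path_edges a n Es" and cyc: "is_cycle (n, Es) vs es"
  shows False
proof -
  define v where "v = Min (set vs)"
  have walk: "vs \<noteq> []" "length es = length vs"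
    "\<forall>i<length vs. es ! i < length Es \<and>
        connects (Es ! (es ! i)) (vs ! i) (vs ! (Suc i mod length vs))"
    using cyc unfolding is_cycle_def closed_walk_def by auto
  have v: "v \<in> set vs" "\<And>x. x \<in> set vs \<Longrightarrow> v \<le> x" unfolding v_def using walk(1) by simp_all
  have ends: "e_u (Es ! j) \<in> set vs \<and> e_w (Es ! j) \<in> set vs \<and>
      Es ! j \<in> set Es" if j: "j \<in> set es" for j
  proof -
    obtain t where t: "t < length es" "es ! t = j" using j by (auto simp: in_set_conv_nth)
    then have t_vs: "t < length vs" "Suc t mod length vs < length vs" using walk(1,2) by simp_all
    then have "vs ! t \<in> set vs" "vs ! (Suc t mod length vs) \<in> set vs" by (meson nth_mem)+
    then show ?thesis using walk(3) t t_vs unfolding connects_def by auto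
  qed
  have shape: "e_w (Es ! j) = Suc (e_u (Es ! j))" if j: "j \<in> set es" for j
  proof -
    obtain j' d where "Es ! j = path_edge a j' d"
      using path ends[OF j] unfolding path_edges_def by blast
    then show ?thesis by simp
  qed
  have lower: "e_u (Es ! j) = v" if j: "j \<in> set es" "incident v (Es ! j)" for j
    using j shape[OF j(1)] ends[OF j(1)] v(2) unfolding incident_def by force
  have distinct_u: "e1 = e2" if "e1 \<in> set Es" "e2 \<in> set Es" "e_u e1 = e_u e2" for e1 e2
    using path that unfolding path_edges_def by blast
  obtain j1 j2 where j: "j1 \<in> set es" "arrow_in v (Es ! j1)" "j2 \<in> set es" "arrow_out v (Es ! j2)"
    using cyc v(1) unfolding is_cycle_def by auto
  then have "e_u (Es ! j1) = v" "e_u (Es ! j2) = v"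
    using lower incident_if_arrow_in incident_if_arrow_out by (auto simp: incident_def)
  moreover from this have "Es ! j1 = Es ! j2"
    using ends[OF j(1)] ends[OF j(3)] by (intro distinct_u) auto
  ultimately show False using j(2,4) shape[OF j(1)] unfolding arrow_in_def arrow_out_def by auto
qed

lemma signed_poset_path_edges:
  assumes "path_edges a n Es"
  shows "signed_poset (n, Es)"
proof -
  have "e_u e < n \<and> e_w e < n \<and> (if e_pos e then e_au e \<noteq> e_aw e else e_au e = e_aw e)"
    if e: "e \<in> set Es" for e
  proof -
    obtain j d where "Suc j < n" "e = path_edge a j d"
      using assms e unfolding path_edges_def by blast
    then show ?thesis by simp
  qed
  then show ?thesis
    using path_edges_no_cycle[OF assms] unfolding signed_poset_def is_oriented_def by auto
qed

lemma inY_path_count: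
  assumes "finite J"
  shows "path_edges a n Es \<Longrightarrow> \<forall>e\<in>set Es. e_u e \<notin> J \<Longrightarrow> \<forall>j\<in>J. Suc j < n \<Longrightarrow>
    inY (\<lambda>M. of_nat (path_count a n Es J M))"
  using assms
proof (induction J arbitrary: Es rule: finite_induct)
  case empty
  have "proper (n, Es) k \<and> preserves (n, Es) k \<and> mset k = M \<longleftrightarrow>
      length k = n \<and> (\<forall>e\<in>set Es. respects_edge e (k ! e_u e) (k ! e_w e)) \<and> mset k = M" for k M
    using proper_preserves_iff[of "(n, Es)" k] by auto
  then have "(\<lambda>M. of_nat (path_count a n Es {} M)) = Y (n, Es)"
    unfolding path_count_def Y_def by simp
  then show ?case using inY_Y[OF signed_poset_path_edges[OF empty.prems(1)]] by simp
next
  case (insert j J)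
  have extended: "path_edges a n (path_edge a j d # Es)" "\<forall>e\<in>set (path_edge a j d # Es). e_u e \<notin> J"
    for d using insert.prems insert.hyps(2) unfolding path_edges_def by auto
  have "inY (\<lambda>M. of_nat (path_count a n Es J M))"
    "inY (\<lambda>M. of_nat (path_count a n (path_edge a j True # Es) J M))"
    "inY (\<lambda>M. of_nat (path_count a n (path_edge a j False # Es) J M))"
    using insert.IH insert.prems extended by auto
  then show ?case by (simp only: path_count_insert inY_diff)
qed

definition block_list :: "nat \<Rightarrow> nat \<Rightarrow> int \<Rightarrow> int list" where
  "block_list a b i = replicate a i @ replicate b (- i)"

lemma block_list_nth: "t < a + b \<Longrightarrow> block_list a b i ! t = (if t < a then i else - i)"
  unfolding block_list_def by (simp add: nth_append)

lemma tied_iff_block_list: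
  assumes a: "1 \<le> a" and len: "length k = a + b"
  shows "(\<forall>j\<in>{0..<a + b - 1}. tied a j (k ! j) (k ! Suc j)) \<longleftrightarrow> k = block_list a b (k ! 0)"
proof
  assume tied: "\<forall>j\<in>{0..<a + b - 1}. tied a j (k ! j) (k ! Suc j)"
  have "t < a + b \<longrightarrow> k ! t = (if t < a then k ! 0 else - (k ! 0))" for t
  proof (induction t)
    case (Suc t)
    show ?case
    proof
      assume t: "Suc t < a + b"
      then have "tied a t (k ! t) (k ! Suc t)" using tied by simp
      then show "k ! Suc t = (if Suc t < a then k ! 0 else - (k ! 0))"
        using Suc t a unfolding tied_def by (auto split: if_splits)
    qed
  qed (use a in simp)
  then show "k = block_list a b (k ! 0)"
    using len by (simp add: list_eq_iff_nth_eq block_list_nth) (simp add: block_list_def)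
next
  assume "k = block_list a b (k ! 0)"
  then obtain i where k: "k = block_list a b i" by blast
  show "\<forall>j\<in>{0..<a + b - 1}. tied a j (k ! j) (k ! Suc j)"
    using a unfolding k tied_def by (auto simp: block_list_nth)
qed

lemma p_eq_path_count:
  assumes a: "1 \<le> a"
  shows "p a b = (\<lambda>M. of_nat (path_count a (a + b) [] {0..<a + b - 1} M))"
proof
  fix M
  let ?K = "{k. length k = a + b \<and> (\<forall>e\<in>set []. respects_edge e (k ! e_u e) (k ! e_w e)) \<and>
               (\<forall>j\<in>{0..<a + b - 1}. tied a j (k ! j) (k ! Suc j)) \<and> mset k = M}"
  have mset_block: "mset (block_list a b i) = replicate_mset a i + replicate_mset b (- i)" for i
    unfolding block_list_def by simp
  have "bij_betw (block_list a b) {i. replicate_mset a i + replicate_mset b (- i) = M} ?K"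
  proof (rule bij_betw_byWitness[where f' = "\<lambda>k. k ! 0"])
    show "\<forall>i\<in>{i. replicate_mset a i + replicate_mset b (- i) = M}. block_list a b i ! 0 = i"
      using a by (simp add: block_list_nth)
    show "\<forall>k\<in>?K. block_list a b (k ! 0) = k"
      using tied_iff_block_list[OF a] by auto
    show "block_list a b ` {i. replicate_mset a i + replicate_mset b (- i) = M} \<subseteq> ?K"
    proof
      fix k assume "k \<in> block_list a b ` {i. replicate_mset a i + replicate_mset b (- i) = M}"
      then obtain i where i: "k = block_list a b i"
          "replicate_mset a i + replicate_mset b (- i) = M"
        by blast
      have len: "length k = a + b" unfolding i block_list_def by simp
      moreover have "k ! 0 = i" using a unfolding i by (simp add: block_list_nth)
      ultimately show "k \<in> ?K" using tied_iff_block_list[OF a len] i mset_block by simp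
    qed
    show "(\<lambda>k. k ! 0) ` ?K \<subseteq> {i. replicate_mset a i + replicate_mset b (- i) = M}"
      using tied_iff_block_list[OF a] by (auto simp flip: mset_block)
  qed
  then show "p a b M = of_nat (path_count a (a + b) [] {0..<a + b - 1} M)"
    unfolding p_def path_count_def by (simp add: bij_betw_same_card)
qed

lemma inY_p: "1 \<le> a \<Longrightarrow> inY (p a b)"
  unfolding p_eq_path_count by (rule inY_path_count) (auto simp: path_edges_def)

lemma phi_eqI:
  assumes "inY f"
    and "\<And>Ps cs. \<forall>P\<in>set Ps. signed_poset P \<Longrightarrow> length cs = length Ps \<Longrightarrow> f = lin_comb Ps cs \<Longrightarrow>
           (\<Sum>j<length Ps. monom (cs ! j) (sinks (Ps ! j))) = q"
  shows "phi f = q"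
proof -
  obtain Ps cs where rep: "\<forall>P\<in>set Ps. signed_poset P" "length cs = length Ps" "f = lin_comb Ps cs"
    using assms(1) unfolding inY_def by blast
  show ?thesis
    unfolding phi_def
  proof (rule the_equality)
    show "\<forall>Ps cs. (\<forall>P\<in>set Ps. signed_poset P) \<and> length cs = length Ps \<and> f = lin_comb Ps cs \<longrightarrow>
        q = (\<Sum>j<length Ps. monom (cs ! j) (sinks (Ps ! j)))"
      using assms(2) by (intro allI impI, elim conjE) (rule sym)
  next
    fix q' assume "\<forall>Ps cs. (\<forall>P\<in>set Ps. signed_poset P) \<and> length cs = length Ps \<and>
        f = lin_comb Ps cs \<longrightarrow>
        q' = (\<Sum>j<length Ps. monom (cs ! j) (sinks (Ps ! j)))"
    then have "q' = (\<Sum>j<length Ps. monom (cs ! j) (sinks (Ps ! j)))" using rep by blast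
    then show "q' = q" using assms(2)[OF rep] by simp
  qed
qed

theorem theorem6p7:
  fixes a b :: nat
  assumes "a \<ge> 1" and "b \<ge> 1"
  shows "phi (p a b) = - ((-1) ^ (a + b))"
proof (rule phi_eqI)
  show "inY (p a b)" using assms(1) by (rule inY_p)
next
  fix Ps cs assume posets: "\<forall>P\<in>set Ps. signed_poset P" and rep: "p a b = lin_comb Ps cs"
  define D where "D = a + b + sum_list (map fst Ps)"
  have "fst P \<le> D" if "P \<in> set Ps" for P
  proof -
    have "fst P \<le> sum_list (map fst Ps)" using that by (intro member_le_sum_list) auto
    then show ?thesis unfolding D_def by simp
  qed
  then have "(\<Sum>j<length Ps. monom (cs ! j) (sinks (Ps ! j))) =
      extrap_neg1 D (specialize D (lin_comb Ps cs))"
    using posets by (simp add: extrap_specialize_lin_comb)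
  also have "\<dots> = - ((-1) ^ (a + b))"
    using extrap_specialize_p[OF assms] unfolding rep[symmetric] D_def by simp
  finally show "(\<Sum>j<length Ps. monom (cs ! j) (sinks (Ps ! j))) = - ((-1) ^ (a + b))" .
qed

end
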